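(* Let $K$ be a finite set with $|K|\ge2$ and $X=2^K$, and let $f^{\mathcal{W}}:\mathcal{P}^n\to 2^K$ be a non-dictatorial voting by committees with committees $\mathcal{W}=\{\mathcal{W}_k\}_{k\in K}$. Then $f^{\mathcal{W}}$ is NOM if and only if for each $k\in K$: (i) $\bigcap_{M\in\mathcal{W}_k}M=\emptyset$, and (ii) $|M|\ge2$ for each $M\in\mathcal{W}_k$.
   Context: $N=\{1,\dots,n\}$, $n\ge2$. Alternatives are subsets of $K$; $\mathcal{P}$ is the set of all strict linear orders on $2^K$ (not necessarily separable); $t(P_i)\subseteq K$ is the top of $P_i$. A committee for $k$ is a non-empty set $\mathcal{W}_k$ of non-empty subsets of $N$ such that $M\in\mathcal{W}_k$ and $M\subseteq M'$ imply $M'\in\mathcal{W}_k$. The voting by committees $f^{\mathcal{W}}$ is defined by: $k\in f^{\mathcal{W}}(P)$ iff $\{i\in N:k\in t(P_i)\}\in\mathcal{W}_k$. A rule is dictatorial if there is $i$ with $f(P)=t(P_i)$ for all $P$. Option set $O(P_i)=\{f(P_i,P_{-i}):P_{-i}\in\mathcal{P}^{n-1}\}$. $P_i'$ is a manipulation at $P_i$ if $f(P_i',P_{-i})P_if(P_i,P_{-i})$ for some $P_{-i}$; it is obvious if the $P_i$-worst element of $O(P_i')$ is strictly $P_i$-better than that of $O(P_i)$, or the $P_i$-best element of $O(P_i')$ is strictly $P_i$-better than that of $O(P_i)$. NOM means no obvious manipulation exists. *)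

theory Defs
  imports Main
begin

text \<open>Voters are N = {1..n}. Alternatives are subsets of K.
  A preference is a strict linear order on Pow K, represented as a relation;
  (X, Y) \<in> P means X is strictly preferred to Y.\<close>

definition prefs :: "'k set \<Rightarrow> ('k set \<times> 'k set) set set" where
  "prefs K = {P. strict_linear_order_on (Pow K) P \<and> P \<subseteq> Pow K \<times> Pow K}"

definition voters :: "nat \<Rightarrow> nat set" where
  "voters n = {1..n}"

definition profiles :: "'k set \<Rightarrow> nat \<Rightarrow> (nat \<Rightarrow> ('k set \<times> 'k set) set) set" where
  "profiles K n = {P. \<forall>i\<in>voters n. P i \<in> prefs K}"

definition best :: "('a \<times> 'a) set \<Rightarrow> 'a set \<Rightarrow> 'a" where
  "best P S = (THE x. x \<in> S \<and> (\<forall>y\<in>S. y \<noteq> x \<longrightarrow> (x, y) \<in> P))"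

definition worst :: "('a \<times> 'a) set \<Rightarrow> 'a set \<Rightarrow> 'a" where
  "worst P S = (THE x. x \<in> S \<and> (\<forall>y\<in>S. y \<noteq> x \<longrightarrow> (y, x) \<in> P))"

definition top :: "'k set \<Rightarrow> ('k set \<times> 'k set) set \<Rightarrow> 'k set" where
  "top K P = best P (Pow K)"

definition committees :: "'k set \<Rightarrow> nat \<Rightarrow> ('k \<Rightarrow> nat set set) \<Rightarrow> bool" where
  "committees K n W \<longleftrightarrow> (\<forall>k\<in>K. W k \<noteq> {} \<and>
     (\<forall>M\<in>W k. M \<noteq> {} \<and> M \<subseteq> voters n) \<and>
     (\<forall>M M'. M \<in> W k \<longrightarrow> M \<subseteq> M' \<longrightarrow> M' \<subseteq> voters n \<longrightarrow> M' \<in> W k))"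

definition vbc :: "'k set \<Rightarrow> nat \<Rightarrow> ('k \<Rightarrow> nat set set)
    \<Rightarrow> (nat \<Rightarrow> ('k set \<times> 'k set) set) \<Rightarrow> 'k set" where
  "vbc K n W P = {k \<in> K. {i \<in> voters n. k \<in> top K (P i)} \<in> W k}"

definition dictatorial :: "'k set \<Rightarrow> nat \<Rightarrow> ((nat \<Rightarrow> ('k set \<times> 'k set) set) \<Rightarrow> 'k set) \<Rightarrow> bool" where
  "dictatorial K n f \<longleftrightarrow> (\<exists>i\<in>voters n. \<forall>P\<in>profiles K n. f P = top K (P i))"

definition option_set :: "'k set \<Rightarrow> nat \<Rightarrow> ((nat \<Rightarrow> ('k set \<times> 'k set) set) \<Rightarrow> 'k set)
    \<Rightarrow> nat \<Rightarrow> ('k set \<times> 'k set) set \<Rightarrow> 'k set set" where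
  "option_set K n f i Pi = {f (P(i := Pi)) | P. P \<in> profiles K n}"

definition manipulation :: "'k set \<Rightarrow> nat \<Rightarrow> ((nat \<Rightarrow> ('k set \<times> 'k set) set) \<Rightarrow> 'k set)
    \<Rightarrow> nat \<Rightarrow> ('k set \<times> 'k set) set \<Rightarrow> ('k set \<times> 'k set) set \<Rightarrow> bool" where
  "manipulation K n f i Pi Pi' \<longleftrightarrow>
     (\<exists>P\<in>profiles K n. (f (P(i := Pi')), f (P(i := Pi))) \<in> Pi)"

definition obvious_manipulation :: "'k set \<Rightarrow> nat \<Rightarrow> ((nat \<Rightarrow> ('k set \<times> 'k set) set) \<Rightarrow> 'k set)
    \<Rightarrow> nat \<Rightarrow> ('k set \<times> 'k set) set \<Rightarrow> ('k set \<times> 'k set) set \<Rightarrow> bool" where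
  "obvious_manipulation K n f i Pi Pi' \<longleftrightarrow> manipulation K n f i Pi Pi' \<and>
     ((worst Pi (option_set K n f i Pi'), worst Pi (option_set K n f i Pi)) \<in> Pi \<or>
      (best Pi (option_set K n f i Pi'), best Pi (option_set K n f i Pi)) \<in> Pi)"

definition NOM :: "'k set \<Rightarrow> nat \<Rightarrow> ((nat \<Rightarrow> ('k set \<times> 'k set) set) \<Rightarrow> 'k set) \<Rightarrow> bool" where
  "NOM K n f \<longleftrightarrow> (\<forall>i\<in>voters n. \<forall>Pi\<in>prefs K. \<forall>Pi'\<in>prefs K.
     \<not> obvious_manipulation K n f i Pi Pi')"

end

theory Submission
  imports Defs
begin

text \<open>Call voter i pivotal for object k if, against a unanimous rest of the electorate,
  i alone decides whether k is elected: either {i} wins k or N - {i} does not.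
  Conditions (i) and (ii) say exactly that nobody is pivotal for anything. Then whatever i
  reports, the others can enforce every outcome, so all option sets equal 2^K and no
  misreport is an obvious manipulation.

  Conversely, let i be pivotal for kb. Non-dictatorship (with |K| \<ge> 2) yields an object
  ka \<noteq> kb that i alone cannot force in or cannot keep out. Choose w so that i can push kb
  to the other side of w (into w if {i} wins kb, out of it otherwise), and let t differ
  from w only at ka, in the direction in which i cannot move ka. If i truly ranks t first
  and w last, then against the others all reporting w she cannot escape w, so w is the
  worst element of her option set; but by reporting a top that disagrees with w at kb she
  avoids w against every profile, which makes the worst case of that report strictly
  better.\<close>

lemma prefsD:
  assumes "P \<in> prefs K"
  shows "trans P" "irrefl P" "total_on (Pow K) P" "P \<subseteq> Pow K \<times> Pow K"
  using assms unfolding prefs_def strict_linear_order_on_def by auto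

lemma converse_in_prefs: "P \<in> prefs K \<Longrightarrow> P\<inverse> \<in> prefs K"
  unfolding prefs_def strict_linear_order_on_def by auto

lemma worst_eq_best_converse: "worst P S = best (P\<inverse>) S"
  unfolding worst_def best_def by simp

lemma best_eqI:
  assumes "P \<in> prefs K" "x \<in> S" "\<forall>y\<in>S - {x}. (x, y) \<in> P"
  shows "best P S = x"
  unfolding best_def
proof (rule the_equality)
  fix z assume z: "z \<in> S \<and> (\<forall>y\<in>S. y \<noteq> z \<longrightarrow> (z, y) \<in> P)"
  show "z = x"
  proof (rule ccontr)
    assume "z \<noteq> x"
    then have "(z, x) \<in> P" "(x, z) \<in> P" using z assms(2,3) by auto
    then show False using prefsD(1,2)[OF assms(1)] by (meson irreflD transD)
  qed
qed (use assms in auto)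

lemma wf_prefs:
  assumes "finite K" "P \<in> prefs K"
  shows "wf P"
proof (rule finite_acyclic_wf)
  show "finite P" using prefsD(4)[OF assms(2)] assms(1) by (simp add: finite_subset)
  show "acyclic P" using prefsD(1,2)[OF assms(2)] by (simp add: acyclic_irrefl)
qed

lemma best_in:
  assumes "finite K" "P \<in> prefs K" "S \<noteq> {}" "S \<subseteq> Pow K"
  shows "best P S \<in> S"
proof -
  obtain x where x: "x \<in> S" and undominated: "\<And>y. (y, x) \<in> P \<Longrightarrow> y \<notin> S"
    using wfE_min[OF wf_prefs[OF assms(1,2)]] assms(3) by blast
  have "(x, y) \<in> P" if "y \<in> S - {x}" for y
    using prefsD(3)[OF assms(2)] that x undominated assms(4) unfolding total_on_def by blast
  then show ?thesis using best_eqI[OF assms(2) x] x by simp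
qed

lemma worst_in:
  "finite K \<Longrightarrow> P \<in> prefs K \<Longrightarrow> S \<noteq> {} \<Longrightarrow> S \<subseteq> Pow K \<Longrightarrow> worst P S \<in> S"
  by (simp add: worst_eq_best_converse best_in converse_in_prefs)

lemma top_subset: "finite K \<Longrightarrow> P \<in> prefs K \<Longrightarrow> top K P \<subseteq> K"
  unfolding top_def using best_in[of K P "Pow K"] by auto

definition rank_pref :: "('k set \<Rightarrow> 'a::linorder) \<Rightarrow> 'k set \<Rightarrow> ('k set \<times> 'k set) set" where
  "rank_pref g K = {(X, Y). X \<in> Pow K \<and> Y \<in> Pow K \<and> g X < g Y}"

lemma rank_pref_in_prefs:
  assumes "inj_on g (Pow K)"
  shows "rank_pref g K \<in> prefs K"
proof -
  have "total_on (Pow K) (rank_pref g K)"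
    unfolding total_on_def
  proof (intro ballI impI)
    fix X Y assume XY: "X \<in> Pow K" "Y \<in> Pow K" "X \<noteq> Y"
    then have "g X \<noteq> g Y" using inj_onD[OF assms] by blast
    then show "(X, Y) \<in> rank_pref g K \<or> (Y, X) \<in> rank_pref g K"
      using XY(1,2) by (auto simp: rank_pref_def neq_iff)
  qed
  then show ?thesis
    unfolding prefs_def strict_linear_order_on_def by (auto simp: rank_pref_def trans_def irrefl_def)
qed

lemma exists_pref_top_bottom:
  assumes "finite K" "T \<subseteq> K" "B \<subseteq> K" "T \<noteq> B"
  shows "\<exists>P\<in>prefs K. top K P = T \<and> (\<forall>X\<in>Pow K - {B}. (X, B) \<in> P)"
proof -
  obtain h :: "'a set \<Rightarrow> nat" and m where h: "h ` Pow K = {i. i < m}" "inj_on h (Pow K)"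
    using finite_imp_inj_to_nat_seg[of "Pow K"] assms(1) by auto
  define g where "g X = (if X = T then 0 else if X = B then m + 1 else h X + 1)" for X
  have h_less: "X \<in> Pow K \<Longrightarrow> h X < m" for X using h(1) by auto
  have "inj_on g (Pow K)"
  proof (rule inj_onI)
    fix X Y assume XY: "X \<in> Pow K" "Y \<in> Pow K" "g X = g Y"
    then show "X = Y"
      using h_less[OF XY(1)] h_less[OF XY(2)] inj_onD[OF h(2)]
      by (auto simp: g_def split: if_splits)
  qed
  then have P: "rank_pref g K \<in> prefs K" by (rule rank_pref_in_prefs)
  moreover have "top K (rank_pref g K) = T" unfolding top_def
    by (rule best_eqI[OF P]) (use assms in \<open>auto simp: rank_pref_def g_def\<close>)
  moreover have "\<forall>X\<in>Pow K - {B}. (X, B) \<in> rank_pref g K"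
    using assms h_less unfolding rank_pref_def g_def by auto
  ultimately show ?thesis by blast
qed

lemma exists_pref_top:
  assumes "finite K" "T \<subseteq> K"
  shows "\<exists>P\<in>prefs K. top K P = T"
proof (cases "K = {}")
  case True
  then have empty_pref: "{} \<in> prefs K"
    by (simp add: prefs_def strict_linear_order_on_def total_on_def)
  have "top K {} = T" unfolding top_def
    by (rule best_eqI[OF empty_pref]) (use True assms(2) in auto)
  then show ?thesis using empty_pref by blast
next
  case False
  then obtain B where "B \<subseteq> K" "B \<noteq> T" by blast
  then show ?thesis using exists_pref_top_bottom[OF assms] by blast
qed

lemma committee_upward:
  "committees K n W \<Longrightarrow> k \<in> K \<Longrightarrow> M \<in> W k \<Longrightarrow> M \<subseteq> M' \<Longrightarrow> M' \<subseteq> voters n \<Longrightarrow> M' \<in> W k"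
  unfolding committees_def by blast

lemma committee_member:
  "committees K n W \<Longrightarrow> k \<in> K \<Longrightarrow> M \<in> W k \<Longrightarrow> M \<noteq> {} \<and> M \<subseteq> voters n"
  unfolding committees_def by blast

lemma voters_in_committee:
  assumes "committees K n W" "k \<in> K"
  shows "voters n \<in> W k"
proof -
  obtain M where "M \<in> W k" using assms unfolding committees_def by blast
  then show ?thesis using committee_upward[OF assms] committee_member[OF assms] by blast
qed

definition pivotal :: "nat \<Rightarrow> ('k \<Rightarrow> nat set set) \<Rightarrow> nat \<Rightarrow> 'k \<Rightarrow> bool" where
  "pivotal n W i k \<longleftrightarrow> {i} \<in> W k \<or> voters n - {i} \<notin> W k"

lemma no_pivotal_iff:
  assumes com: "committees K n W" and k: "k \<in> K"
  shows "(\<forall>i\<in>voters n. \<not> pivotal n W i k) \<longleftrightarrow> \<Inter>(W k) = {} \<and> (\<forall>M\<in>W k. card M \<ge> 2)"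
proof
  assume no_pivotal: "\<forall>i\<in>voters n. \<not> pivotal n W i k"
  have "i \<notin> \<Inter>(W k)" for i
  proof
    assume i: "i \<in> \<Inter>(W k)"
    then have "i \<in> voters n"
      using voters_in_committee[OF com k] by blast
    then show False using i no_pivotal unfolding pivotal_def by blast
  qed
  moreover have "card M \<ge> 2" if M: "M \<in> W k" for M
  proof (rule ccontr)
    assume "\<not> card M \<ge> 2"
    moreover have "M \<noteq> {}" "M \<subseteq> voters n" using committee_member[OF com k M] by auto
    moreover then have "card M \<noteq> 0" by (simp add: voters_def finite_subset)
    ultimately obtain a where "M = {a}" by (metis One_nat_def card_1_singletonE less_2_cases not_le)
    then show False using M no_pivotal \<open>M \<subseteq> voters n\<close> unfolding pivotal_def by blast
  qed
  ultimately show "\<Inter>(W k) = {} \<and> (\<forall>M\<in>W k. card M \<ge> 2)" by blast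
next
  assume conds: "\<Inter>(W k) = {} \<and> (\<forall>M\<in>W k. card M \<ge> 2)"
  show "\<forall>i\<in>voters n. \<not> pivotal n W i k"
  proof (intro ballI)
    fix i assume "i \<in> voters n"
    obtain M where M: "M \<in> W k" "i \<notin> M" using conds by blast
    then have "M \<subseteq> voters n - {i}" using committee_member[OF com k M(1)] by blast
    then have "voters n - {i} \<in> W k" using committee_upward[OF com k M(1)] by blast
    moreover have "{i} \<notin> W k" using conds by fastforce
    ultimately show "\<not> pivotal n W i k" unfolding pivotal_def by blast
  qed
qed

lemma vbc_subset: "vbc K n W P \<subseteq> K"
  unfolding vbc_def by auto

lemma in_vbc_if_singleton_wins:
  assumes com: "committees K n W" and k: "k \<in> K" and i: "i \<in> voters n"
    and "{i} \<in> W k" "k \<in> top K (P i)"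
  shows "k \<in> vbc K n W P"
proof -
  have "{i} \<subseteq> {j \<in> voters n. k \<in> top K (P j)}" using i assms(5) by blast
  then have "{j \<in> voters n. k \<in> top K (P j)} \<in> W k"
    using committee_upward[OF com k assms(4)] by blast
  then show ?thesis using k unfolding vbc_def by blast
qed

lemma not_in_vbc_if_others_lose:
  assumes com: "committees K n W" and "voters n - {i} \<notin> W k" "k \<notin> top K (P i)"
  shows "k \<notin> vbc K n W P"
proof
  assume "k \<in> vbc K n W P"
  then have k: "k \<in> K" "{j \<in> voters n. k \<in> top K (P j)} \<in> W k" unfolding vbc_def by auto
  have "{j \<in> voters n. k \<in> top K (P j)} \<subseteq> voters n - {i}" using assms(3) by blast
  then have "voters n - {i} \<in> W k" using committee_upward[OF com k] by blast
  then show False using assms(2) by blast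
qed

lemma dictatorial_vbc:
  assumes fin: "finite K" and com: "committees K n W" and i: "i \<in> voters n"
    and decisive: "\<forall>k\<in>K. {i} \<in> W k \<and> voters n - {i} \<notin> W k"
  shows "dictatorial K n (vbc K n W)"
  unfolding dictatorial_def
proof (intro bexI[OF _ i] ballI set_eqI)
  fix P k assume "P \<in> profiles K n"
  then have "top K (P i) \<subseteq> K" using top_subset[OF fin] i unfolding profiles_def by blast
  then show "k \<in> vbc K n W P \<longleftrightarrow> k \<in> top K (P i)"
    using decisive vbc_subset[of K n W P]
      in_vbc_if_singleton_wins[OF com _ i, of k P] not_in_vbc_if_others_lose[OF com, of i k P]
    by blast
qed

lemma vbc_unanimous_but_one:
  assumes com: "committees K n W" and i: "i \<in> voters n"
    and w: "w \<subseteq> K" "top K Pw = w"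
    and lonely: "\<forall>k\<in>top K Q - w. {i} \<notin> W k"
    and others: "\<forall>k\<in>w - top K Q. voters n - {i} \<in> W k"
  shows "vbc K n W ((\<lambda>_. Pw)(i := Q)) = w"
proof -
  let ?C = "\<lambda>k. {j \<in> voters n. k \<in> top K (((\<lambda>_. Pw)(i := Q)) j)}"
  have elected: "?C k \<in> W k \<longleftrightarrow> k \<in> w" if k: "k \<in> K" for k
  proof (cases "k \<in> top K Q")
    case True
    then have "?C k = (if k \<in> w then voters n else {i})" using i w(2) by auto
    then show ?thesis using voters_in_committee[OF com k] lonely k True by auto
  next
    case False
    then have "?C k = (if k \<in> w then voters n - {i} else {})" using i w(2) by auto
    then show ?thesis using committee_member[OF com k, of "{}"] others k False by auto
  qed
  show ?thesis
  proof (rule set_eqI)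
    fix k
    have "k \<in> vbc K n W ((\<lambda>_. Pw)(i := Q)) \<longleftrightarrow> k \<in> K \<and> ?C k \<in> W k"
      unfolding vbc_def by (rule mem_Collect_eq)
    then show "k \<in> vbc K n W ((\<lambda>_. Pw)(i := Q)) \<longleftrightarrow> k \<in> w"
      using elected[of k] w(1) by blast
  qed
qed

lemma option_set_vbc_eq_Pow:
  assumes fin: "finite K" and com: "committees K n W" and i: "i \<in> voters n"
    and Q: "Q \<in> prefs K" and no_pivotal: "\<forall>k\<in>K. \<not> pivotal n W i k"
  shows "option_set K n (vbc K n W) i Q = Pow K"
proof
  show "option_set K n (vbc K n W) i Q \<subseteq> Pow K"
    by (auto simp: option_set_def vbc_def)
  show "Pow K \<subseteq> option_set K n (vbc K n W) i Q"
  proof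
    fix S assume S: "S \<in> Pow K"
    then obtain Ps where Ps: "Ps \<in> prefs K" "top K Ps = S" using exists_pref_top[OF fin] by blast
    have "{i} \<notin> W k" "voters n - {i} \<in> W k" if "k \<in> K" for k
      using no_pivotal that unfolding pivotal_def by auto
    then have "vbc K n W ((\<lambda>_. Ps)(i := Q)) = S"
      using vbc_unanimous_but_one[OF com i _ Ps(2)] S top_subset[OF fin Q] by blast
    moreover have "(\<lambda>_. Ps) \<in> profiles K n" using Ps(1) by (simp add: profiles_def)
    ultimately show "S \<in> option_set K n (vbc K n W) i Q"
      unfolding option_set_def by blast
  qed
qed

lemma NOM_vbc_if_no_pivotal:
  assumes "finite K" "committees K n W" "\<forall>i\<in>voters n. \<forall>k\<in>K. \<not> pivotal n W i k"
  shows "NOM K n (vbc K n W)"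
  unfolding NOM_def
proof (intro ballI notI)
  fix i Pi Pi' assume i: "i \<in> voters n" and Pi: "Pi \<in> prefs K" and Pi': "Pi' \<in> prefs K"
    and "obvious_manipulation K n (vbc K n W) i Pi Pi'"
  moreover have "option_set K n (vbc K n W) i Pi' = option_set K n (vbc K n W) i Pi"
    using option_set_vbc_eq_Pow[OF assms(1,2) i] Pi Pi' assms(3) i by simp
  ultimately show False
    using prefsD(2)[OF Pi] unfolding obvious_manipulation_def irrefl_def by simp
qed

lemma obvious_manipulation_if_worst_avoidable:
  assumes fin: "finite K" and range: "\<And>P. f P \<subseteq> K"
    and Pi: "Pi \<in> prefs K" and w_worst: "\<forall>X\<in>Pow K - {w}. (X, w) \<in> Pi"
    and P0: "P0 \<in> profiles K n" and truthful: "f (P0(i := Pi)) = w"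
    and avoid: "\<forall>P\<in>profiles K n. f (P(i := Pi')) \<noteq> w"
  shows "obvious_manipulation K n f i Pi Pi'"
proof -
  let ?O = "option_set K n f i Pi" and ?O' = "option_set K n f i Pi'"
  have O_Pow: "?O \<subseteq> Pow K" "?O' \<subseteq> Pow K" unfolding option_set_def using range by blast+
  have "w \<in> ?O" unfolding option_set_def using P0 truthful by blast
  then have worst_O: "worst Pi ?O = w"
    unfolding worst_eq_best_converse
    by (rule best_eqI[OF converse_in_prefs[OF Pi]]) (use O_Pow w_worst in blast)
  have "f (P0(i := Pi')) \<in> ?O'" unfolding option_set_def using P0 by blast
  then have "worst Pi ?O' \<in> ?O'" using worst_in[OF fin Pi _ O_Pow(2)] by blast
  then have "worst Pi ?O' \<in> Pow K - {w}"
    using O_Pow(2) avoid unfolding option_set_def by blast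
  then have "(worst Pi ?O', worst Pi ?O) \<in> Pi" using worst_O w_worst by simp
  moreover have "manipulation K n f i Pi Pi'"
    unfolding manipulation_def using P0 truthful avoid w_worst range by blast
  ultimately show ?thesis unfolding obvious_manipulation_def by blast
qed

lemma not_NOM_vbc:
  assumes fin: "finite K" and com: "committees K n W" and i: "i \<in> voters n"
    and tw: "t \<subseteq> K" "w \<subseteq> K" "t \<noteq> w"
    and stuck: "\<forall>k\<in>t - w. {i} \<notin> W k" "\<forall>k\<in>w - t. voters n - {i} \<in> W k"
    and kb: "kb \<in> K" and flip: "({i} \<in> W kb \<and> kb \<notin> w) \<or> (voters n - {i} \<notin> W kb \<and> kb \<in> w)"
  shows "\<not> NOM K n (vbc K n W)"
proof
  assume nom: "NOM K n (vbc K n W)"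
  obtain Pi where Pi: "Pi \<in> prefs K" "top K Pi = t" "\<forall>X\<in>Pow K - {w}. (X, w) \<in> Pi"
    using exists_pref_top_bottom[OF fin tw] by blast
  have "{kb} - w \<subseteq> K" using kb by blast
  then obtain Pi' where Pi': "Pi' \<in> prefs K" "top K Pi' = {kb} - w"
    using exists_pref_top[OF fin] by blast
  obtain Pw where Pw: "Pw \<in> prefs K" "top K Pw = w"
    using exists_pref_top[OF fin tw(2)] by blast
  have P0: "(\<lambda>_. Pw) \<in> profiles K n" using Pw(1) by (simp add: profiles_def)
  have "vbc K n W ((\<lambda>_. Pw)(i := Pi)) = w"
    by (rule vbc_unanimous_but_one[OF com i tw(2) Pw(2)]) (use Pi(2) stuck in auto)
  moreover have "vbc K n W (P(i := Pi')) \<noteq> w" for P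
    using flip
  proof
    assume "{i} \<in> W kb \<and> kb \<notin> w"
    then show ?thesis using in_vbc_if_singleton_wins[OF com kb i, of "P(i := Pi')"] Pi'(2) by auto
  next
    assume "voters n - {i} \<notin> W kb \<and> kb \<in> w"
    then show ?thesis using not_in_vbc_if_others_lose[OF com, of i kb "P(i := Pi')"] Pi'(2) by auto
  qed
  ultimately have "obvious_manipulation K n (vbc K n W) i Pi Pi'"
    using obvious_manipulation_if_worst_avoidable[where f = "vbc K n W", OF fin vbc_subset Pi(1,3) P0]
    by blast
  then show False using nom i Pi(1) Pi'(1) unfolding NOM_def by blast
qed

lemma not_NOM_vbc_if_pivotal_pair:
  assumes fin: "finite K" and com: "committees K n W" and i: "i \<in> voters n"
    and ab: "ka \<in> K" "kb \<in> K" "ka \<noteq> kb"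
    and pivotal: "pivotal n W i kb" and not_decisive: "\<not> ({i} \<in> W ka \<and> voters n - {i} \<notin> W ka)"
  shows "\<not> NOM K n (vbc K n W)"
proof -
  define w where "w = (if {i} \<in> W kb then {} else {kb})"
  have w: "w \<subseteq> K" "ka \<notin> w" using ab by (auto simp: w_def)
  have flip: "({i} \<in> W kb \<and> kb \<notin> v) \<or> (voters n - {i} \<notin> W kb \<and> kb \<in> v)"
    if "kb \<in> v \<longleftrightarrow> kb \<in> w" for v
    using that pivotal unfolding pivotal_def w_def by (auto split: if_splits)
  from not_decisive consider "{i} \<notin> W ka" | "voters n - {i} \<in> W ka" by blast
  then show ?thesis
  proof cases
    case 1
    show ?thesis
      by (rule not_NOM_vbc[of K n W i "insert ka w" w kb]) (use fin com i w ab 1 flip in auto)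
  next
    case 2
    show ?thesis
      by (rule not_NOM_vbc[of K n W i w "insert ka w" kb]) (use fin com i w ab 2 flip in auto)
  qed
qed

lemma not_NOM_vbc_if_pivotal:
  assumes fin: "finite K" and two: "card K \<ge> 2" and com: "committees K n W"
    and not_dict: "\<not> dictatorial K n (vbc K n W)"
    and i: "i \<in> voters n" and k0: "k0 \<in> K" "pivotal n W i k0"
  shows "\<not> NOM K n (vbc K n W)"
proof -
  let ?decisive = "\<lambda>k. {i} \<in> W k \<and> voters n - {i} \<notin> W k"
  obtain ka where ka: "ka \<in> K" "\<not> ?decisive ka"
    using dictatorial_vbc[OF fin com i] not_dict by blast
  obtain k1 where k1: "k1 \<in> K" "k1 \<noteq> k0"
    using two k0(1) card_le_Suc0_iff_eq[OF fin] by (metis not_less_eq_eq numeral_2_eq_2)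
  show ?thesis
  proof (cases "ka = k0")
    case False
    then show ?thesis using not_NOM_vbc_if_pivotal_pair[OF fin com i ka(1) k0(1)] ka k0 by blast
  next
    case True
    show ?thesis
    proof (cases "?decisive k1")
      case True
      then have "pivotal n W i k1" unfolding pivotal_def by blast
      then show ?thesis
        using not_NOM_vbc_if_pivotal_pair[OF fin com i ka(1) k1(1)] ka k1 \<open>ka = k0\<close> by blast
    next
      case False
      then show ?thesis using not_NOM_vbc_if_pivotal_pair[OF fin com i k1(1) k0(1)] k1 k0 by blast
    qed
  qed
qed

theorem theorem4:
  fixes K :: "'k set" and n :: nat and W :: "'k \<Rightarrow> nat set set"
  assumes "finite K" and "card K \<ge> 2" and "n \<ge> 2"
    and "committees K n W"
    and "\<not> dictatorial K n (vbc K n W)"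
  shows "NOM K n (vbc K n W) \<longleftrightarrow>
    (\<forall>k\<in>K. \<Inter>(W k) = {} \<and> (\<forall>M\<in>W k. card M \<ge> 2))"
proof -
  have "NOM K n (vbc K n W) \<longleftrightarrow> (\<forall>k\<in>K. \<forall>i\<in>voters n. \<not> pivotal n W i k)"
    using NOM_vbc_if_no_pivotal[OF assms(1,4)] not_NOM_vbc_if_pivotal[OF assms(1,2,4,5)] by blast
  also have "\<dots> \<longleftrightarrow> (\<forall>k\<in>K. \<Inter>(W k) = {} \<and> (\<forall>M\<in>W k. card M \<ge> 2))"
    using no_pivotal_iff[OF assms(4)] by blast
  finally show ?thesis .
qed

end
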